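(* Let $\psi:A_1\to A_2$ be an isomorphism of double quasi-Poisson algebras over $B=\bigoplus_{s\in I}\Bbbk e_s$. If $A_1,A_2$ are quasi-Hamiltonian algebras with multiplicative moment maps $\Phi_1,\Phi_2$, then $\Phi_2=\nu\,\psi(\Phi_1)$ for some $\nu\in B^\times$ (i.e. $\nu=\sum_s\nu_se_s$ with all $\nu_s\in\Bbbk^\times$). In particular, a multiplicative moment map on a double quasi-Poisson algebra is unique up to multiplication by an element of $B^\times$.
   Context: $\Bbbk$ field of characteristic $0$; algebras associative, unital, finitely generated; $B=\bigoplus_{s\in I}\Bbbk e_s$, orthogonal idempotents summing to $1$. Sweedler notation, $(d'\otimes d'')^\circ=d''\otimes d'$, outer bimodule $a(d'\otimes d'')b=ad'\otimes d''b$. $B$-linear double bracket: bilinear $\{\!\{-,-\}\!\}:A\times A\to A\otimes A$, $\{\!\{a,b\}\!\}=-\{\!\{b,a\}\!\}^\circ$, $\{\!\{a,bc\}\!\}=\{\!\{a,b\}\!\}c+b\{\!\{a,c\}\!\}$, zero on $B$. Triple bracket $\{\!\{a,b,c\}\!\}=\{\!\{a,\{\!\{b,c\}\!\}'\}\!\}\otimes\{\!\{b,c\}\!\}''+\tau(\{\!\{b,\{\!\{c,a\}\!\}'\}\!\}\otimes\{\!\{c,a\}\!\}'')+\tau^2(\{\!\{c,\{\!\{a,b\}\!\}'\}\!\}\otimes\{\!\{a,b\}\!\}'')$, $\tau(a_1\otimes a_2\otimes a_3)=a_3\otimes a_1\otimes a_2$. Double quasi-Poisson: $\{\!\{a,b,c\}\!\}=\frac14\sum_s(ce_sa\otimes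 e_sb\otimes e_s-ce_sa\otimes e_s\otimes be_s-ce_s\otimes ae_sb\otimes e_s+ce_s\otimes ae_s\otimes be_s-e_sa\otimes e_sb\otimes e_sc+e_sa\otimes e_s\otimes be_sc+e_s\otimes ae_sb\otimes e_sc-e_s\otimes ae_s\otimes be_sc)$. Multiplicative moment map: invertible $\Phi=\sum_s\Phi_s$, $\Phi_s\in e_sAe_s$, with $\{\!\{\Phi_s,a\}\!\}=\frac12(ae_s\otimes\Phi_s-e_s\otimes\Phi_sa+a\Phi_s\otimes e_s-\Phi_s\otimes e_sa)$ for all $a,s$; quasi-Hamiltonian algebra = double quasi-Poisson algebra with multiplicative moment map. An isomorphism of double quasi-Poisson algebras is a $B$-algebra isomorphism $\psi$ with $\{\!\{\psi a,\psi b\}\!\}_2=(\psi\otimes\psi)\{\!\{a,b\}\!\}_1$. *)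

theory Defs
  imports Complex_Main
begin

text \<open>
A \<open>k\<close>-algebra is a type \<open>'a :: ring_1\<close> (the whole type is the algebra)
together with a scalar multiplication \<open>scale :: 'k \<Rightarrow> 'a \<Rightarrow> 'a\<close> over a field \<open>'k\<close>
of characteristic 0.

An element of \<open>A \<otimes>_k A\<close> is represented by a finite formal sum
\<open>\<Sum> c_i (x_i \<otimes> y_i)\<close>, i.e. a list of triples \<open>(c_i, x_i, y_i)\<close>.  Two such formal
sums denote the same element of \<open>A \<otimes>_k A\<close> iff every \<open>k\<close>-bilinear form
\<open>A \<times> A \<rightarrow> k\<close> takes the same value on them (the dual of \<open>A \<otimes> A\<close> is the space of
bilinear forms, and over a field the dual separates points).  Likewise for
\<open>A \<otimes> A \<otimes> A\<close> with trilinear forms.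
\<close>

definition k_algebra :: "('k::field \<Rightarrow> 'a::ring_1 \<Rightarrow> 'a) \<Rightarrow> bool" where
  "k_algebra scale \<longleftrightarrow> vector_space scale \<and>
     (\<forall>c x y. scale c (x * y) = scale c x * y \<and> scale c (x * y) = x * scale c y)"

inductive_set alg_gen :: "('k \<Rightarrow> 'a::ring_1 \<Rightarrow> 'a) \<Rightarrow> 'a set \<Rightarrow> 'a set"
  for scale S where
  gen: "x \<in> S \<Longrightarrow> x \<in> alg_gen scale S"
| one: "1 \<in> alg_gen scale S"
| add: "x \<in> alg_gen scale S \<Longrightarrow> y \<in> alg_gen scale S \<Longrightarrow> x + y \<in> alg_gen scale S"
| mult: "x \<in> alg_gen scale S \<Longrightarrow> y \<in> alg_gen scale S \<Longrightarrow> x * y \<in> alg_gen scale S"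
| smult: "x \<in> alg_gen scale S \<Longrightarrow> scale c x \<in> alg_gen scale S"

definition fin_gen_algebra :: "('k::field \<Rightarrow> 'a::ring_1 \<Rightarrow> 'a) \<Rightarrow> bool" where
  "fin_gen_algebra scale \<longleftrightarrow> k_algebra scale \<and> (\<exists>S. finite S \<and> alg_gen scale S = UNIV)"

text \<open>\<open>B = \<Oplus>_{s\<in>I} k e_s\<close>: complete family of orthogonal idempotents in \<open>A\<close>.\<close>
definition B_idempotents :: "('i \<Rightarrow> 'a::ring_1) \<Rightarrow> 'i set \<Rightarrow> bool" where
  "B_idempotents e I \<longleftrightarrow> finite I \<and>
     (\<forall>s\<in>I. \<forall>t\<in>I. e s * e t = (if s = t then e s else 0)) \<and> (\<Sum>s\<in>I. e s) = 1"

definition invertible_elem :: "'a::ring_1 \<Rightarrow> bool" where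
  "invertible_elem x \<longleftrightarrow> (\<exists>y. x * y = 1 \<and> y * x = 1)"

type_synonym ('k, 'a) tensor2 = "('k \<times> 'a \<times> 'a) list"
type_synonym ('k, 'a) tensor3 = "('k \<times> 'a \<times> 'a \<times> 'a) list"

definition bilin_form :: "('k::field \<Rightarrow> 'a::ab_group_add \<Rightarrow> 'a) \<Rightarrow> ('a \<Rightarrow> 'a \<Rightarrow> 'k) \<Rightarrow> bool" where
  "bilin_form scale f \<longleftrightarrow>
     (\<forall>y. Vector_Spaces.linear scale ((*)) (\<lambda>x. f x y)) \<and>
     (\<forall>x. Vector_Spaces.linear scale ((*)) (\<lambda>y. f x y))"

definition trilin_form :: "('k::field \<Rightarrow> 'a::ab_group_add \<Rightarrow> 'a) \<Rightarrow> ('a \<Rightarrow> 'a \<Rightarrow> 'a \<Rightarrow> 'k) \<Rightarrow> bool" where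
  "trilin_form scale f \<longleftrightarrow>
     (\<forall>y z. Vector_Spaces.linear scale ((*)) (\<lambda>x. f x y z)) \<and>
     (\<forall>x z. Vector_Spaces.linear scale ((*)) (\<lambda>y. f x y z)) \<and>
     (\<forall>x y. Vector_Spaces.linear scale ((*)) (\<lambda>z. f x y z))"

definition ev2 :: "('a \<Rightarrow> 'a \<Rightarrow> 'k::comm_ring_1) \<Rightarrow> ('k, 'a) tensor2 \<Rightarrow> 'k" where
  "ev2 f t = (\<Sum>(c, x, y)\<leftarrow>t. c * f x y)"

definition ev3 :: "('a \<Rightarrow> 'a \<Rightarrow> 'a \<Rightarrow> 'k::comm_ring_1) \<Rightarrow> ('k, 'a) tensor3 \<Rightarrow> 'k" where
  "ev3 f t = (\<Sum>(c, x, y, z)\<leftarrow>t. c * f x y z)"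

definition teq2 :: "('k::field \<Rightarrow> 'a::ab_group_add \<Rightarrow> 'a) \<Rightarrow> ('k, 'a) tensor2 \<Rightarrow> ('k, 'a) tensor2 \<Rightarrow> bool" where
  "teq2 scale t u \<longleftrightarrow> (\<forall>f. bilin_form scale f \<longrightarrow> ev2 f t = ev2 f u)"

definition teq3 :: "('k::field \<Rightarrow> 'a::ab_group_add \<Rightarrow> 'a) \<Rightarrow> ('k, 'a) tensor3 \<Rightarrow> ('k, 'a) tensor3 \<Rightarrow> bool" where
  "teq3 scale t u \<longleftrightarrow> (\<forall>f. trilin_form scale f \<longrightarrow> ev3 f t = ev3 f u)"

definition double_bracket ::
  "('k::field \<Rightarrow> 'a::ring_1 \<Rightarrow> 'a) \<Rightarrow> ('i \<Rightarrow> 'a) \<Rightarrow> 'i set \<Rightarrow> ('a \<Rightarrow> 'a \<Rightarrow> ('k, 'a) tensor2) \<Rightarrow> bool" where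
  "double_bracket scale e I br \<longleftrightarrow>
     (\<forall>x y z. teq2 scale (br (x + y) z) (br x z @ br y z)) \<and>
     (\<forall>c x z. teq2 scale (br (scale c x) z) (map (\<lambda>(d, u, v). (c * d, u, v)) (br x z))) \<and>
     (\<forall>x y z. teq2 scale (br z (x + y)) (br z x @ br z y)) \<and>
     (\<forall>c x z. teq2 scale (br z (scale c x)) (map (\<lambda>(d, u, v). (c * d, u, v)) (br z x))) \<and>
     (\<forall>a b. teq2 scale (br a b) (map (\<lambda>(d, u, v). (- d, v, u)) (br b a))) \<and>
     (\<forall>a b c. teq2 scale (br a (b * c))
        (map (\<lambda>(d, u, v). (d, u, v * c)) (br a b) @ map (\<lambda>(d, u, v). (d, b * u, v)) (br a c))) \<and>
     (\<forall>s\<in>I. \<forall>a. teq2 scale (br (e s) a) [])"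

definition leg1 :: "('a \<Rightarrow> 'a \<Rightarrow> ('k::times, 'a) tensor2) \<Rightarrow> 'a \<Rightarrow> ('k, 'a) tensor2 \<Rightarrow> ('k, 'a) tensor3" where
  "leg1 br a t = concat (map (\<lambda>(c, x, y). map (\<lambda>(d, u, v). (c * d, u, v, y)) (br a x)) t)"

definition tau3 :: "('k, 'a) tensor3 \<Rightarrow> ('k, 'a) tensor3" where
  "tau3 t = map (\<lambda>(c, x, y, z). (c, z, x, y)) t"

definition triple_bracket :: "('a \<Rightarrow> 'a \<Rightarrow> ('k::times, 'a) tensor2) \<Rightarrow> 'a \<Rightarrow> 'a \<Rightarrow> 'a \<Rightarrow> ('k, 'a) tensor3" where
  "triple_bracket br a b c =
     leg1 br a (br b c) @ tau3 (leg1 br b (br c a)) @ tau3 (tau3 (leg1 br c (br a b)))"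

definition qp_term :: "('i \<Rightarrow> 'a::ring_1) \<Rightarrow> 'i \<Rightarrow> 'a \<Rightarrow> 'a \<Rightarrow> 'a \<Rightarrow> ('k::field, 'a) tensor3" where
  "qp_term e s a b c =
    [( 1/4, c * e s * a, e s * b, e s),
     (-1/4, c * e s * a, e s, b * e s),
     (-1/4, c * e s, a * e s * b, e s),
     ( 1/4, c * e s, a * e s, b * e s),
     (-1/4, e s * a, e s * b, e s * c),
     ( 1/4, e s * a, e s, b * e s * c),
     ( 1/4, e s, a * e s * b, e s * c),
     (-1/4, e s, a * e s, b * e s * c)]"

text \<open>Double quasi-Poisson algebra.  The right-hand side is the tensor
\<open>\<Sum>_{s\<in>I} qp_term s\<close>; its value on a trilinear form is the sum of the values.\<close>
definition double_quasi_Poisson ::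
  "('k::field_char_0 \<Rightarrow> 'a::ring_1 \<Rightarrow> 'a) \<Rightarrow> ('i \<Rightarrow> 'a) \<Rightarrow> 'i set \<Rightarrow> ('a \<Rightarrow> 'a \<Rightarrow> ('k, 'a) tensor2) \<Rightarrow> bool" where
  "double_quasi_Poisson scale e I br \<longleftrightarrow>
     fin_gen_algebra scale \<and> B_idempotents e I \<and> double_bracket scale e I br \<and>
     (\<forall>a b c f. trilin_form scale f \<longrightarrow>
        ev3 f (triple_bracket br a b c) = (\<Sum>s\<in>I. ev3 f (qp_term e s a b c)))"

text \<open>Multiplicative moment map \<open>\<Phi> = \<Sum>_s \<Phi>_s\<close>, \<open>\<Phi>_s \<in> e_s A e_s\<close>
(necessarily \<open>\<Phi>_s = e_s \<Phi> e_s\<close>).\<close>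
definition mult_moment_map ::
  "('k::field_char_0 \<Rightarrow> 'a::ring_1 \<Rightarrow> 'a) \<Rightarrow> ('i \<Rightarrow> 'a) \<Rightarrow> 'i set \<Rightarrow> ('a \<Rightarrow> 'a \<Rightarrow> ('k, 'a) tensor2) \<Rightarrow> 'a \<Rightarrow> bool" where
  "mult_moment_map scale e I br \<Phi> \<longleftrightarrow>
     invertible_elem \<Phi> \<and> \<Phi> = (\<Sum>s\<in>I. e s * \<Phi> * e s) \<and>
     (\<forall>s\<in>I. \<forall>a. let \<Phi>s = e s * \<Phi> * e s in
        teq2 scale (br \<Phi>s a)
          [(1/2, a * e s, \<Phi>s), (-1/2, e s, \<Phi>s * a), (1/2, a * \<Phi>s, e s), (-1/2, \<Phi>s, e s * a)])"

definition quasi_Hamiltonian ::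
  "('k::field_char_0 \<Rightarrow> 'a::ring_1 \<Rightarrow> 'a) \<Rightarrow> ('i \<Rightarrow> 'a) \<Rightarrow> 'i set \<Rightarrow> ('a \<Rightarrow> 'a \<Rightarrow> ('k, 'a) tensor2) \<Rightarrow> 'a \<Rightarrow> bool" where
  "quasi_Hamiltonian scale e I br \<Phi> \<longleftrightarrow>
     double_quasi_Poisson scale e I br \<and> mult_moment_map scale e I br \<Phi>"

definition dqP_iso ::
  "('k::field \<Rightarrow> 'a::ring_1 \<Rightarrow> 'a) \<Rightarrow> ('i \<Rightarrow> 'a) \<Rightarrow> ('a \<Rightarrow> 'a \<Rightarrow> ('k, 'a) tensor2) \<Rightarrow>
   ('k \<Rightarrow> 'b::ring_1 \<Rightarrow> 'b) \<Rightarrow> ('i \<Rightarrow> 'b) \<Rightarrow> ('b \<Rightarrow> 'b \<Rightarrow> ('k, 'b) tensor2) \<Rightarrow>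
   'i set \<Rightarrow> ('a \<Rightarrow> 'b) \<Rightarrow> bool" where
  "dqP_iso scale1 e1 br1 scale2 e2 br2 I \<psi> \<longleftrightarrow>
     bij \<psi> \<and> (\<forall>x y. \<psi> (x + y) = \<psi> x + \<psi> y) \<and> (\<forall>x y. \<psi> (x * y) = \<psi> x * \<psi> y) \<and>
     \<psi> 1 = 1 \<and> (\<forall>c x. \<psi> (scale1 c x) = scale2 c (\<psi> x)) \<and> (\<forall>s\<in>I. \<psi> (e1 s) = e2 s) \<and>
     (\<forall>a b. teq2 scale2 (br2 (\<psi> a) (\<psi> b)) (map (\<lambda>(c, x, y). (c, \<psi> x, \<psi> y)) (br1 a b)))"

end

theory Submission
  imports Defs
begin

text \<open>
An isomorphism transports \<open>\<Phi>\<^sub>1\<close> to a second multiplicative moment map \<open>P = \<psi>(\<Phi>\<^sub>1)\<close> for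
the bracket of \<open>A\<^sub>2\<close>, so it suffices to compare two moment maps \<open>P, Q\<close> for one bracket.
Computing \<open>{{P\<^sub>s, Q\<^sub>s}}\<close> once with the moment map property of \<open>P\<^sub>s\<close> and once, via
skew-symmetry, with that of \<open>Q\<^sub>s\<close> yields \<open>P\<^sub>s \<otimes> Q\<^sub>s = Q\<^sub>s \<otimes> P\<^sub>s\<close>.  Since \<open>P\<^sub>s \<noteq> 0\<close>
whenever \<open>e\<^sub>s \<noteq> 0\<close> (invertibility of \<open>P\<close>), this forces \<open>Q\<^sub>s = \<nu>\<^sub>s P\<^sub>s\<close>, and \<open>\<nu>\<^sub>s \<noteq> 0\<close>
because \<open>Q\<^sub>s \<noteq> 0\<close> as well.
\<close>

lemma vector_space_field_self: "vector_space ((*) :: 'k::field \<Rightarrow> 'k \<Rightarrow> 'k)"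
  by unfold_locales (simp_all add: algebra_simps)

lemma exists_linear_functional_eq_1:
  fixes scale :: "'k::field \<Rightarrow> 'a::ab_group_add \<Rightarrow> 'a"
  assumes "vector_space scale" and "x \<noteq> 0"
  shows "\<exists>g. Vector_Spaces.linear scale (*) g \<and> g x = 1"
proof -
  interpret vector_space_pair scale "(*) :: 'k \<Rightarrow> 'k \<Rightarrow> 'k"
    by (intro vector_space_pair.intro assms(1) vector_space_field_self)
  have "vs1.independent {x}" using assms(2) by simp
  from linear_independent_extend[OF this, of "\<lambda>_. 1"] show ?thesis by auto
qed

lemma bilin_form_flip: "bilin_form scale f \<Longrightarrow> bilin_form scale (\<lambda>x y. f y x)"
  by (simp add: bilin_form_def)

lemma bilin_form_product:
  fixes scale :: "'k::field \<Rightarrow> 'a::ab_group_add \<Rightarrow> 'a"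
  assumes "Vector_Spaces.linear scale (*) g" "Vector_Spaces.linear scale (*) h"
  shows "bilin_form scale (\<lambda>x y. g x * h y)"
  using assms unfolding bilin_form_def Vector_Spaces.linear_iff
  by (simp add: algebra_simps)

lemma bilin_form_compose:
  fixes scale1 :: "'k::field \<Rightarrow> 'a::ab_group_add \<Rightarrow> 'a" and scale2 :: "'k \<Rightarrow> 'b::ab_group_add \<Rightarrow> 'b"
  assumes "bilin_form scale2 f" "vector_space scale1"
    and "\<And>x y. \<psi> (x + y) = \<psi> x + \<psi> y" "\<And>c x. \<psi> (scale1 c x) = scale2 c (\<psi> x)"
  shows "bilin_form scale1 (\<lambda>x y. f (\<psi> x) (\<psi> y))"
  using assms unfolding bilin_form_def Vector_Spaces.linear_iff
  by (simp add: vector_space_field_self)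

lemma proportional_if_bilin_symmetric:
  fixes scale :: "'k::field \<Rightarrow> 'a::ab_group_add \<Rightarrow> 'a"
  assumes vs: "vector_space scale" and "x \<noteq> 0"
    and sym: "\<And>f. bilin_form scale f \<Longrightarrow> f y x = f x y"
    and g: "Vector_Spaces.linear scale (*) g" "g x = 1"
  shows "y = scale (g y) x"
proof (rule ccontr)
  assume "y \<noteq> scale (g y) x"
  then obtain h where h: "Vector_Spaces.linear scale (*) h" and h1: "h (y - scale (g y) x) = 1"
    using exists_linear_functional_eq_1[OF vs] by (metis eq_iff_diff_eq_0)
  interpret Vector_Spaces.linear scale "(*)" h by (fact h)
  have "h (y - scale (g y) x) = h y - g y * h x" by (simp add: diff scale)
  also have "\<dots> = 0"
    using sym[OF bilin_form_product[OF g(1) h]] g(2) by (simp add: mult.commute)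
  finally show False using h1 by simp
qed

lemma ev2_map_tensor:
  "ev2 f (map (\<lambda>(c, x, y). (c, \<psi> x, \<psi> y)) t) = ev2 (\<lambda>x y. f (\<psi> x) (\<psi> y)) t"
  by (induct t) (auto simp: ev2_def)

lemma ev2_flip:
  fixes f :: "'a \<Rightarrow> 'a \<Rightarrow> 'k::comm_ring_1"
  shows "ev2 f (map (\<lambda>(d, u, v). (- d, v, u)) t) = - ev2 (\<lambda>x y. f y x) t"
  by (induct t) (auto simp: ev2_def)

lemma teq2_trans: "teq2 scale t u \<Longrightarrow> teq2 scale u v \<Longrightarrow> teq2 scale t v"
  by (simp add: teq2_def)

lemma teq2_map_tensor:
  fixes scale1 :: "'k::field \<Rightarrow> 'a::ab_group_add \<Rightarrow> 'a" and scale2 :: "'k \<Rightarrow> 'b::ab_group_add \<Rightarrow> 'b"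
  assumes "teq2 scale1 t u" "vector_space scale1"
    and "\<And>x y. \<psi> (x + y) = \<psi> x + \<psi> y" "\<And>c x. \<psi> (scale1 c x) = scale2 c (\<psi> x)"
  shows "teq2 scale2 (map (\<lambda>(c, x, y). (c, \<psi> x, \<psi> y)) t) (map (\<lambda>(c, x, y). (c, \<psi> x, \<psi> y)) u)"
  using assms(1) bilin_form_compose[where \<psi> = \<psi>, OF _ assms(2-4)]
  unfolding teq2_def ev2_map_tensor by blast

lemma idempotent_mult_block_decomposed:
  fixes e :: "'i \<Rightarrow> 'a::ring_1"
  assumes B: "B_idempotents e I" and dec: "P = (\<Sum>t\<in>I. e t * P * e t)" and s: "s \<in> I"
  shows "e s * P = e s * P * e s" "P * e s = e s * P * e s"
proof -
  have orth: "\<And>t. t \<in> I \<Longrightarrow> e s * e t = (if s = t then e s else 0)"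
    "\<And>t. t \<in> I \<Longrightarrow> e t * e s = (if t = s then e s else 0)"
    using B s unfolding B_idempotents_def by auto
  have fin: "finite I" using B unfolding B_idempotents_def by auto
  have "e s * P = (\<Sum>t\<in>I. e s * (e t * P * e t))" by (subst dec) (simp add: sum_distrib_left)
  also have "\<dots> = (\<Sum>t\<in>I. if s = t then e s * P * e s else 0)"
    by (rule sum.cong) (auto simp: mult.assoc[symmetric] orth)
  finally show "e s * P = e s * P * e s" using fin s by simp
  have "P * e s = (\<Sum>t\<in>I. (e t * P * e t) * e s)" by (subst dec) (simp add: sum_distrib_right)
  also have "\<dots> = (\<Sum>t\<in>I. if t = s then e s * P * e s else 0)"
    by (rule sum.cong) (auto simp: mult.assoc orth)
  finally show "P * e s = e s * P * e s" using fin s by (simp add: sum.delta')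
qed

lemma idempotent_eq_0_if_block_eq_0:
  fixes e :: "'i \<Rightarrow> 'a::ring_1"
  assumes B: "B_idempotents e I" and dec: "P = (\<Sum>t\<in>I. e t * P * e t)" and s: "s \<in> I"
    and inv: "invertible_elem P" and block: "e s * P * e s = 0"
  shows "e s = 0"
proof -
  obtain R where R: "P * R = 1" using inv unfolding invertible_elem_def by auto
  have "e s * e s = e s" using B s unfolding B_idempotents_def by auto
  then have "e s = (e s * P) * R * e s" by (simp add: mult.assoc R)
  then show ?thesis using idempotent_mult_block_decomposed[OF B dec s] block by simp
qed

definition moment_tensor :: "'a::ring_1 \<Rightarrow> 'a \<Rightarrow> 'a \<Rightarrow> ('k::field, 'a) tensor2" where
  "moment_tensor e P a = [(1/2, a * e, P), (-1/2, e, P * a), (1/2, a * P, e), (-1/2, P, e * a)]"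

lemma mult_moment_map_iff:
  "mult_moment_map scale e I br \<Phi> \<longleftrightarrow> invertible_elem \<Phi> \<and> \<Phi> = (\<Sum>s\<in>I. e s * \<Phi> * e s) \<and>
     (\<forall>s\<in>I. \<forall>a. teq2 scale (br (e s * \<Phi> * e s) a) (moment_tensor (e s) (e s * \<Phi> * e s) a))"
  by (simp add: mult_moment_map_def moment_tensor_def Let_def)

lemma
  assumes "mult_moment_map scale e I br \<Phi>"
  shows mult_moment_map_invertible: "invertible_elem \<Phi>"
    and mult_moment_map_block_sum: "\<Phi> = (\<Sum>s\<in>I. e s * \<Phi> * e s)"
    and mult_moment_map_blockD:
      "s \<in> I \<Longrightarrow> teq2 scale (br (e s * \<Phi> * e s) a) (moment_tensor (e s) (e s * \<Phi> * e s) a)"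
  using assms unfolding mult_moment_map_iff by blast+

lemma double_bracket_skew:
  "double_bracket scale e I br \<Longrightarrow> teq2 scale (br a b) (map (\<lambda>(d, u, v). (- d, v, u)) (br b a))"
  by (simp add: double_bracket_def)

text \<open>Both sides of skew-symmetry for \<open>{{P, Q}}\<close> contain the same terms involving \<open>e\<close>;
what remains is \<open>Q \<otimes> P - P \<otimes> Q = P \<otimes> Q - Q \<otimes> P\<close>.\<close>

lemma moment_elements_commute_in_tensor:
  fixes scale :: "'k::field_char_0 \<Rightarrow> 'a::ring_1 \<Rightarrow> 'a"
  assumes skew: "\<And>a b. teq2 scale (br a b) (map (\<lambda>(d, u, v). (- d, v, u)) (br b a))"
    and P: "\<And>a. teq2 scale (br P a) (moment_tensor e P a)"
    and Q: "\<And>a. teq2 scale (br Q a) (moment_tensor e Q a)"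
    and "e * P = P" "P * e = P" "e * Q = Q" "Q * e = Q"
    and f: "bilin_form scale f"
  shows "f Q P = f P Q"
proof -
  have "ev2 f (br P Q) = 1/2 * f Q P - 1/2 * f e (P*Q) + 1/2 * f (Q*P) e - 1/2 * f P Q"
    using P[of Q] f by (simp add: teq2_def ev2_def moment_tensor_def assms(4-7))
  moreover have "ev2 (\<lambda>x y. f y x) (br Q P) =
      1/2 * f Q P - 1/2 * f (Q*P) e + 1/2 * f e (P*Q) - 1/2 * f P Q"
    using Q[of P] bilin_form_flip[OF f] by (simp add: teq2_def ev2_def moment_tensor_def assms(4-7))
  moreover have "ev2 f (br P Q) = - ev2 (\<lambda>x y. f y x) (br Q P)"
    using skew[of P Q] f by (simp add: teq2_def ev2_flip)
  ultimately show ?thesis by (simp add: field_simps)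
qed

lemma mult_moment_map_blocks_proportional:
  fixes scale :: "'k::field_char_0 \<Rightarrow> 'a::ring_1 \<Rightarrow> 'a"
  assumes vs: "vector_space scale" and B: "B_idempotents e I" and br: "double_bracket scale e I br"
    and P: "mult_moment_map scale e I br P" and Q: "mult_moment_map scale e I br Q" and s: "s \<in> I"
  shows "\<exists>\<nu>. \<nu> \<noteq> 0 \<and> e s * Q * e s = scale \<nu> (e s * P * e s)"
proof (cases "e s = 0")
  case True
  then show ?thesis using vector_space.scale_eq_0_iff[OF vs] by (intro exI[of _ 1]) simp
next
  case False
  define Ps where "Ps = e s * P * e s"
  define Qs where "Qs = e s * Q * e s"
  have "e s * e s = e s" using B s unfolding B_idempotents_def by auto
  then have blocks: "e s * Ps = Ps" "Ps * e s = Ps" "e s * Qs = Qs" "Qs * e s = Qs"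
    unfolding Ps_def Qs_def by (simp_all add: mult.assoc[symmetric]) (simp_all add: mult.assoc)
  have "Ps \<noteq> 0" "Qs \<noteq> 0"
    using idempotent_eq_0_if_block_eq_0[OF B _ s _ _] False
      mult_moment_map_block_sum mult_moment_map_invertible P Q
    unfolding Ps_def Qs_def by metis+
  have sym: "f Qs Ps = f Ps Qs" if "bilin_form scale f" for f
    using moment_elements_commute_in_tensor[OF double_bracket_skew[OF br] _ _ blocks that]
      mult_moment_map_blockD[OF P s] mult_moment_map_blockD[OF Q s] unfolding Ps_def Qs_def .
  obtain g where g: "Vector_Spaces.linear scale (*) g" "g Ps = 1"
    using exists_linear_functional_eq_1[OF vs \<open>Ps \<noteq> 0\<close>] by blast
  have "Qs = scale (g Qs) Ps"
    using proportional_if_bilin_symmetric[OF vs \<open>Ps \<noteq> 0\<close> _ g] sym by blast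
  moreover from this have "g Qs \<noteq> 0"
    using \<open>Qs \<noteq> 0\<close> vector_space.scale_eq_0_iff[OF vs] by metis
  ultimately show ?thesis unfolding Ps_def Qs_def by blast
qed

lemma mult_moment_map_unique:
  fixes scale :: "'k::field_char_0 \<Rightarrow> 'a::ring_1 \<Rightarrow> 'a"
  assumes alg: "k_algebra scale" and B: "B_idempotents e I" and br: "double_bracket scale e I br"
    and P: "mult_moment_map scale e I br P" and Q: "mult_moment_map scale e I br Q"
  shows "\<exists>\<nu>. (\<forall>s\<in>I. \<nu> s \<noteq> 0) \<and> Q = (\<Sum>s\<in>I. scale (\<nu> s) (e s)) * P"
proof -
  have "vector_space scale" using alg unfolding k_algebra_def by blast
  then have "\<forall>s\<in>I. \<exists>\<nu>. \<nu> \<noteq> 0 \<and> e s * Q * e s = scale \<nu> (e s * P * e s)"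
    using mult_moment_map_blocks_proportional[OF _ B br P Q] by blast
  then obtain \<nu> where \<nu>: "\<forall>s\<in>I. \<nu> s \<noteq> 0 \<and> e s * Q * e s = scale (\<nu> s) (e s * P * e s)"
    by (rule bchoice[THEN exE]) blast
  have "(\<Sum>s\<in>I. scale (\<nu> s) (e s)) * P = (\<Sum>s\<in>I. scale (\<nu> s) (e s * P))"
    using alg by (simp add: sum_distrib_right k_algebra_def)
  also have "\<dots> = (\<Sum>s\<in>I. e s * Q * e s)"
    using \<nu> idempotent_mult_block_decomposed(1)[OF B mult_moment_map_block_sum[OF P]]
    by (intro sum.cong) simp_all
  also have "\<dots> = Q" by (rule mult_moment_map_block_sum[OF Q, symmetric])
  finally show ?thesis using \<nu> by metis
qed

lemma mult_moment_map_transport: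
  fixes scale1 :: "'k::field_char_0 \<Rightarrow> 'a::ring_1 \<Rightarrow> 'a" and scale2 :: "'k \<Rightarrow> 'b::ring_1 \<Rightarrow> 'b"
  assumes iso: "dqP_iso scale1 e1 br1 scale2 e2 br2 I \<psi>" and vs: "vector_space scale1"
    and \<Phi>: "mult_moment_map scale1 e1 I br1 \<Phi>"
  shows "mult_moment_map scale2 e2 I br2 (\<psi> \<Phi>)"
proof -
  have add: "\<And>x y. \<psi> (x + y) = \<psi> x + \<psi> y" and mult: "\<And>x y. \<psi> (x * y) = \<psi> x * \<psi> y"
    and one: "\<psi> 1 = 1" and scale: "\<And>c x. \<psi> (scale1 c x) = scale2 c (\<psi> x)"
    and idem: "\<And>s. s \<in> I \<Longrightarrow> \<psi> (e1 s) = e2 s" and "surj \<psi>"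
    and brs: "\<And>a b. teq2 scale2 (br2 (\<psi> a) (\<psi> b)) (map (\<lambda>(c, x, y). (c, \<psi> x, \<psi> y)) (br1 a b))"
    using iso bij_is_surj unfolding dqP_iso_def by auto
  have "invertible_elem (\<psi> \<Phi>)"
    using mult_moment_map_invertible[OF \<Phi>] unfolding invertible_elem_def by (metis mult one)
  moreover have "\<psi> \<Phi> = (\<Sum>s\<in>I. e2 s * \<psi> \<Phi> * e2 s)"
  proof -
    have "\<psi> \<Phi> = \<psi> (\<Sum>s\<in>I. e1 s * \<Phi> * e1 s)" by (rule arg_cong[OF mult_moment_map_block_sum[OF \<Phi>]])
    also have "\<dots> = (\<Sum>s\<in>I. e2 s * \<psi> \<Phi> * e2 s)"
      using additive.sum[OF additive.intro, OF add, of "\<lambda>s. e1 s * \<Phi> * e1 s" I]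
      by (simp add: mult idem)
    finally show ?thesis .
  qed
  moreover have "teq2 scale2 (br2 (e2 s * \<psi> \<Phi> * e2 s) b)
      (moment_tensor (e2 s) (e2 s * \<psi> \<Phi> * e2 s) b)" if s: "s \<in> I" for s b
  proof -
    obtain a where a: "b = \<psi> a" using \<open>surj \<psi>\<close> by (metis surjD)
    have block: "\<psi> (e1 s * \<Phi> * e1 s) = e2 s * \<psi> \<Phi> * e2 s"
      and tensor: "map (\<lambda>(c, x, y). (c, \<psi> x, \<psi> y)) (moment_tensor (e1 s) (e1 s * \<Phi> * e1 s) a) =
        moment_tensor (e2 s) (e2 s * \<psi> \<Phi> * e2 s) (\<psi> a)"
      using s by (simp_all add: moment_tensor_def mult idem)
    from teq2_map_tensor[where \<psi> = \<psi>, OF mult_moment_map_blockD[OF \<Phi> s, where a = a] vs add scale]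
    have "teq2 scale2 (map (\<lambda>(c, x, y). (c, \<psi> x, \<psi> y)) (br1 (e1 s * \<Phi> * e1 s) a))
        (moment_tensor (e2 s) (e2 s * \<psi> \<Phi> * e2 s) (\<psi> a))"
      unfolding tensor .
    with brs[of "e1 s * \<Phi> * e1 s" a] show ?thesis
      unfolding a block by (rule teq2_trans)
  qed
  ultimately show ?thesis unfolding mult_moment_map_iff by blast
qed

theorem mainTheorem14:
  fixes scale1 :: "'k::field_char_0 \<Rightarrow> 'a::ring_1 \<Rightarrow> 'a"
    and scale2 :: "'k \<Rightarrow> 'b::ring_1 \<Rightarrow> 'b"
    and I :: "'i set" and e1 :: "'i \<Rightarrow> 'a" and e2 :: "'i \<Rightarrow> 'b"
    and br1 :: "'a \<Rightarrow> 'a \<Rightarrow> ('k, 'a) tensor2" and br2 :: "'b \<Rightarrow> 'b \<Rightarrow> ('k, 'b) tensor2"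
    and \<psi> :: "'a \<Rightarrow> 'b" and \<Phi>1 :: 'a and \<Phi>2 :: 'b
  assumes "quasi_Hamiltonian scale1 e1 I br1 \<Phi>1"
    and "quasi_Hamiltonian scale2 e2 I br2 \<Phi>2"
    and "dqP_iso scale1 e1 br1 scale2 e2 br2 I \<psi>"
  shows "\<exists>\<nu> :: 'i \<Rightarrow> 'k. (\<forall>s\<in>I. \<nu> s \<noteq> 0) \<and> \<Phi>2 = (\<Sum>s\<in>I. scale2 (\<nu> s) (e2 s)) * \<psi> \<Phi>1"
proof -
  have "vector_space scale1" "mult_moment_map scale1 e1 I br1 \<Phi>1"
    using assms(1) unfolding quasi_Hamiltonian_def double_quasi_Poisson_def fin_gen_algebra_def
      k_algebra_def by blast+
  then have "mult_moment_map scale2 e2 I br2 (\<psi> \<Phi>1)"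
    using mult_moment_map_transport[OF assms(3)] by blast
  moreover have "k_algebra scale2" "B_idempotents e2 I" "double_bracket scale2 e2 I br2"
    "mult_moment_map scale2 e2 I br2 \<Phi>2"
    using assms(2) unfolding quasi_Hamiltonian_def double_quasi_Poisson_def fin_gen_algebra_def
    by blast+
  ultimately show ?thesis using mult_moment_map_unique by blast
qed

end
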